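(* Consider the factor (Tanner) graph of an LDPC code decoded by the binary message-passing decoder described in the context. Let $C$ be a cycle in the factor graph all of whose variable nodes have degree two or three. Assume that the channel messages associated with the variable nodes of $C$ are in error, and that all other incoming messages at the check nodes of $C$ (i.e. those not arriving along edges of $C$) are correct. Then the variable nodes forming the cycle cannot be corrected by the binary message-passing decoder: in every iteration the messages they send along the edges of $C$ remain in error.
   Context: Transmitted bits are represented in $\{+1,-1\}$ and a message is "in error" if its sign differs from the transmitted bit of the corresponding variable node. All messages between variable and check nodes are binary ($\pm1$). In the first iteration each variable node sends its channel hard decision. A check node sends on each edge the product of the messages received on its other edges. A variable node of degree $d_v$ with channel L-value $L_{ch}=y D_{ch}$ ($y\in\{\pm1\}$ the channel hard decision, $D_{ch}>0$ its reliability) and incoming check messages $a_i\in\{\pm1\}$, all converted to L-values $a_iD_{av}$ with a common reliability $D_{av}>0$ in a given iteration, sends on edge $j$ the sign of $L_{ev,j}=L_{ch}+\sum_{i\ne j}a_iD_{av}$. *)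

theory Defs
  imports Complex_Main
begin

text \<open>Tanner (factor) graph: a set of edges between variable nodes of type 'v and
check nodes of type 'c. Messages are binary, represented as integers in {1,-1}.\<close>

definition var_nbrs :: "('v \<times> 'c) set \<Rightarrow> 'v \<Rightarrow> 'c set" where
  "var_nbrs E v = {c. (v, c) \<in> E}"

definition chk_nbrs :: "('v \<times> 'c) set \<Rightarrow> 'c \<Rightarrow> 'v set" where
  "chk_nbrs E c = {v. (v, c) \<in> E}"

text \<open>Hard sign of an L-value (the tie convention at 0 is irrelevant for the theorem).\<close>
definition hard_sign :: "real \<Rightarrow> int" where
  "hard_sign r = (if r \<ge> 0 then 1 else -1)"

definition cv_msg :: "('v \<times> 'c) set \<Rightarrow> ('v \<Rightarrow> 'c \<Rightarrow> int) \<Rightarrow> 'c \<Rightarrow> 'v \<Rightarrow> int" where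
  "cv_msg E m c v = (\<Prod>v'\<in>chk_nbrs E c - {v}. m v' c)"

text \<open>Variable-to-check messages of iteration t (t = 0 is the first iteration).
  y: channel hard decisions, Dch: channel reliability, Dav t: reliability used to
  convert the check messages of iteration t into L-values.\<close>
primrec vc_msg :: "('v \<times> 'c) set \<Rightarrow> ('v \<Rightarrow> int) \<Rightarrow> real \<Rightarrow> (nat \<Rightarrow> real)
    \<Rightarrow> nat \<Rightarrow> 'v \<Rightarrow> 'c \<Rightarrow> int" where
  "vc_msg E y Dch Dav 0 = (\<lambda>v c. y v)"
| "vc_msg E y Dch Dav (Suc t) = (\<lambda>v c. hard_sign (real_of_int (y v) * Dch
      + (\<Sum>c'\<in>var_nbrs E v - {c}.
            real_of_int (cv_msg E (vc_msg E y Dch Dav t) c' v) * Dav t)))"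

text \<open>A cycle v_0 c_0 v_1 c_1 ... v_{k-1} c_{k-1} v_0 in the bipartite graph.\<close>
definition is_cycle :: "('v \<times> 'c) set \<Rightarrow> 'v list \<Rightarrow> 'c list \<Rightarrow> bool" where
  "is_cycle E vs cs \<longleftrightarrow> length vs = length cs \<and> length vs \<ge> 2 \<and> distinct vs \<and> distinct cs \<and>
     (\<forall>i < length vs. (vs ! i, cs ! i) \<in> E \<and> (vs ! (Suc i mod length vs), cs ! i) \<in> E)"

definition cycle_edges :: "'v list \<Rightarrow> 'c list \<Rightarrow> ('v \<times> 'c) set" where
  "cycle_edges vs cs = {(vs ! i, cs ! i) | i. i < length vs}
     \<union> {(vs ! (Suc i mod length vs), cs ! i) | i. i < length vs}"

definition is_codeword :: "('v \<times> 'c) set \<Rightarrow> ('v \<Rightarrow> int) \<Rightarrow> bool" where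
  "is_codeword E x \<longleftrightarrow> (\<forall>v. x v \<in> {1, -1}) \<and> (\<forall>c. (\<Prod>v\<in>chk_nbrs E c. x v) = 1)"

end

theory Submission
  imports Defs
begin

text \<open>The messages along the cycle are initially the
  erroneous channel decisions. Let \<open>(v, c)\<close> be a cycle edge and \<open>c'\<close> the other cycle check
  at \<open>v\<close>. In the previous iteration \<open>c'\<close> received exactly one wrong message, from its other
  cycle neighbour, so by the parity check of the codeword it tells \<open>v\<close> the wrong value,
  which agrees with the wrong channel decision. Since \<open>v\<close> has degree at most three,
  at most one further check message enters \<open>L_ev\<close>, and it cannot outweigh channel plus
  \<open>c'\<close>; hence \<open>v\<close> again sends the wrong value along \<open>(v, c)\<close>.\<close>

lemma prod_in_plus_minus_one:
  "\<forall>a\<in>A. f a \<in> {1, -1::int} \<Longrightarrow> prod f A \<in> {1, -1}"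
proof (cases "finite A")
  case True
  then show "\<forall>a\<in>A. f a \<in> {1, -1::int} \<Longrightarrow> prod f A \<in> {1, -1}"
    by (induction A rule: finite_induct) auto
qed simp

lemma vc_msg_in_plus_minus_one:
  "\<forall>v. y v \<in> {1, -1} \<Longrightarrow> vc_msg E y Dch Dav t v c \<in> {1, -1}"
  by (induction t arbitrary: v c) (auto simp: hard_sign_def)

lemma cv_msg_in_plus_minus_one:
  "\<forall>v c. m v c \<in> {1, -1} \<Longrightarrow> cv_msg E m c v \<in> {1, -1}"
  unfolding cv_msg_def by (rule prod_in_plus_minus_one) auto

lemma finite_chk_nbrs: "finite E \<Longrightarrow> finite (chk_nbrs E c)"
  unfolding chk_nbrs_def by (rule finite_subset[of _ "fst ` E"]) force+

lemma finite_var_nbrs: "finite E \<Longrightarrow> finite (var_nbrs E v)"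
  unfolding var_nbrs_def by (rule finite_subset[of _ "snd ` E"]) force+

lemma hard_sign_dominant:
  assumes "s \<in> {1, -1}" "\<bar>r\<bar> < a"
  shows "hard_sign (real_of_int s * a + r) = s"
  using assms by (auto simp: hard_sign_def abs_less_iff)

lemma cv_msg_single_error:
  assumes fin: "finite (chk_nbrs E c)"
    and parity: "(\<Prod>w\<in>chk_nbrs E c. x w) = 1" and "x v \<in> {1, -1}"
    and v: "v \<in> chk_nbrs E c" and v': "v' \<in> chk_nbrs E c" "v' \<noteq> v"
    and wrong: "m v' c = - x v'"
    and right: "\<And>w. w \<in> chk_nbrs E c - {v, v'} \<Longrightarrow> m w c = x w"
  shows "cv_msg E m c v = - x v"
proof -
  define A where "A = chk_nbrs E c - {v}"
  have "x v * (\<Prod>w\<in>A. x w) = 1"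
    using parity prod.remove[OF fin v, of x] unfolding A_def by simp
  then have prod_A: "(\<Prod>w\<in>A. x w) = x v"
    using \<open>x v \<in> {1, -1}\<close> by auto
  have "cv_msg E m c v = (\<Prod>w\<in>A. (if w = v' then -1 else 1) * x w)"
    unfolding cv_msg_def A_def using wrong right by (intro prod.cong) auto
  also have "\<dots> = (\<Prod>w\<in>A. if w = v' then -1 else 1) * (\<Prod>w\<in>A. x w)"
    by (rule prod.distrib)
  also have "(\<Prod>w\<in>A. if w = v' then -1 else (1::int)) = -1"
    using fin v' unfolding A_def by (simp add: prod.If_cases Int_absorb1)
  finally show ?thesis
    using prod_A by simp
qed

lemma vc_msg_Suc_keeps_channel_sign:
  assumes "finite E" and y: "\<forall>w. y w \<in> {1, -1}"
    and "Dch > 0" and Dav: "Dav t > 0"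
    and deg: "card (var_nbrs E v) \<le> 3"
    and "(v, c) \<in> E" "(v, c') \<in> E" "c' \<noteq> c"
    and agree: "cv_msg E (vc_msg E y Dch Dav t) c' v = y v"
  shows "vc_msg E y Dch Dav (Suc t) v c = y v"
proof -
  let ?m = "vc_msg E y Dch Dav t"
  define f where "f = (\<lambda>b. real_of_int (cv_msg E ?m b v) * Dav t)"
  define R where "R = var_nbrs E v - {c} - {c'}"
  have fin: "finite (var_nbrs E v)"
    using finite_var_nbrs[OF \<open>finite E\<close>] .
  have c_in: "c \<in> var_nbrs E v" and c'_in: "c' \<in> var_nbrs E v - {c}"
    using assms(6-8) unfolding var_nbrs_def by auto
  have split: "(\<Sum>b\<in>var_nbrs E v - {c}. f b) = f c' + sum f R"
    unfolding R_def using sum.remove[OF _ c'_in, of f] fin by simp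
  have "card R = card (var_nbrs E v) - 2"
    unfolding R_def using c_in c'_in fin by simp
  then have card_R: "card R \<le> 1"
    using deg by simp
  have "\<bar>f b\<bar> = Dav t" for b
  proof -
    have "\<forall>a b. ?m a b \<in> {1, -1}"
      by (intro allI vc_msg_in_plus_minus_one[OF y])
    then have "cv_msg E ?m b v \<in> {1, -1}"
      by (rule cv_msg_in_plus_minus_one)
    then show ?thesis
      using Dav by (auto simp: f_def abs_mult)
  qed
  then have "\<bar>sum f R\<bar> \<le> real (card R) * Dav t"
    using sum_abs[of f R] by simp
  also have "\<dots> \<le> Dav t"
    using card_R Dav by (simp add: mult_le_cancel_right1)
  finally have small_rest: "\<bar>sum f R\<bar> < Dch + Dav t"
    using \<open>Dch > 0\<close> by linarith
  have "f c' = real_of_int (y v) * Dav t"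
    unfolding f_def agree ..
  have "vc_msg E y Dch Dav (Suc t) v c
      = hard_sign (real_of_int (y v) * Dch + (\<Sum>b\<in>var_nbrs E v - {c}. f b))"
    by (simp add: f_def)
  also have "\<dots> = hard_sign (real_of_int (y v) * (Dch + Dav t) + sum f R)"
    using split \<open>f c' = real_of_int (y v) * Dav t\<close> by (simp add: algebra_simps)
  also have "\<dots> = y v"
    using hard_sign_dominant y small_rest by blast
  finally show ?thesis .
qed

lemma Suc_mod_neq:
  assumes "i < (n::nat)" "2 \<le> n"
  shows "Suc i mod n \<noteq> i"
proof (cases "Suc i < n")
  case False
  then have "Suc i = n"
    using assms(1) by simp
  then show ?thesis
    using assms(2) by auto
qed simp

lemma ex_mod_predecessor:
  assumes "i < (n::nat)"
  shows "\<exists>j<n. Suc j mod n = i"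
proof (cases i)
  case 0
  then show ?thesis
    using assms by (intro exI[of _ "n - 1"]) auto
next
  case (Suc k)
  then show ?thesis
    using assms by (intro exI[of _ k]) auto
qed

lemma cycle_edge_in_graph:
  assumes "is_cycle E vs cs" "(v, c) \<in> cycle_edges vs cs"
  shows "(v, c) \<in> E" "v \<in> set vs" "c \<in> set cs"
proof -
  have n: "length vs \<ge> 2" "length cs = length vs"
    using assms(1) unfolding is_cycle_def by auto
  from assms(2) obtain i where i: "i < length vs"
    and vc: "c = cs ! i" "v = vs ! i \<or> v = vs ! (Suc i mod length vs)"
    unfolding cycle_edges_def by auto
  show "(v, c) \<in> E"
    using assms(1) i vc unfolding is_cycle_def by auto
  have "Suc i mod length vs < length vs"
    using n(1) by (intro mod_less_divisor) linarith
  then show "v \<in> set vs"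
    using i vc by (auto intro: nth_mem)
  show "c \<in> set cs"
    using i vc n by auto
qed

lemma cycle_check_endpoints:
  assumes "is_cycle E vs cs" "j < length vs" "(w, cs ! j) \<in> cycle_edges vs cs"
  shows "w = vs ! j \<or> w = vs ! (Suc j mod length vs)"
proof -
  from assms(3) obtain i where i: "i < length vs" and "cs ! j = cs ! i"
    and w: "w = vs ! i \<or> w = vs ! (Suc i mod length vs)"
    unfolding cycle_edges_def by auto
  then have "i = j"
    using assms(1,2) unfolding is_cycle_def by (simp add: nth_eq_iff_index_eq)
  then show ?thesis
    using w by simp
qed

lemma cycle_edge_other_check:
  assumes "is_cycle E vs cs" "(v, c) \<in> cycle_edges vs cs"
  shows "\<exists>j<length vs. cs ! j \<noteq> c \<and> (v = vs ! j \<or> v = vs ! (Suc j mod length vs))"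
proof -
  let ?n = "length vs"
  have n: "?n \<ge> 2" "length cs = ?n" and "distinct cs"
    using assms(1) unfolding is_cycle_def by auto
  then have other: "cs ! j \<noteq> cs ! i" if "i < ?n" "j < ?n" "j \<noteq> i" for i j
    using that by (simp add: nth_eq_iff_index_eq)
  from assms(2) obtain i where i: "i < ?n" and c: "c = cs ! i"
    and v: "v = vs ! i \<or> v = vs ! (Suc i mod ?n)"
    unfolding cycle_edges_def by auto
  from v show ?thesis
  proof
    assume "v = vs ! i"
    moreover obtain j where "j < ?n" "Suc j mod ?n = i"
      using ex_mod_predecessor[OF i] by blast
    moreover have "j \<noteq> i"
      using Suc_mod_neq[OF \<open>j < ?n\<close> n(1)] \<open>Suc j mod ?n = i\<close> by auto
    ultimately show ?thesis
      using other i c by auto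
  next
    assume "v = vs ! (Suc i mod ?n)"
    moreover have "Suc i mod ?n < ?n"
      using n(1) by (intro mod_less_divisor) linarith
    moreover have "Suc i mod ?n \<noteq> i"
      using Suc_mod_neq i n(1) by blast
    ultimately show ?thesis
      using other i c by blast
  qed
qed

lemma cycle_edge_continues:
  assumes "is_cycle E vs cs" "(v, c) \<in> cycle_edges vs cs"
  obtains c' v' where "c' \<noteq> c" "v' \<noteq> v" "(v, c') \<in> cycle_edges vs cs"
    "(v', c') \<in> cycle_edges vs cs"
    "\<And>w. (w, c') \<in> cycle_edges vs cs \<Longrightarrow> w = v \<or> w = v'"
proof -
  let ?n = "length vs"
  obtain j where j: "j < ?n" "cs ! j \<noteq> c" and v: "v = vs ! j \<or> v = vs ! (Suc j mod ?n)"
    using cycle_edge_other_check[OF assms] by blast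
  have n: "?n \<ge> 2" "distinct vs"
    using assms(1) unfolding is_cycle_def by auto
  then have "Suc j mod ?n < ?n"
    by (intro mod_less_divisor) linarith
  then have ends_differ: "vs ! j \<noteq> vs ! (Suc j mod ?n)"
    using Suc_mod_neq[OF j(1) n(1)] n(2) j(1) by (simp add: nth_eq_iff_index_eq)
  define v' where "v' = (if v = vs ! j then vs ! (Suc j mod ?n) else vs ! j)"
  have ends: "(vs ! j, cs ! j) \<in> cycle_edges vs cs"
    "(vs ! (Suc j mod ?n), cs ! j) \<in> cycle_edges vs cs"
    using j(1) unfolding cycle_edges_def by auto
  show ?thesis
  proof (rule that[of "cs ! j" v'])
    show "v' \<noteq> v" "(v, cs ! j) \<in> cycle_edges vs cs" "(v', cs ! j) \<in> cycle_edges vs cs"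
      using ends_differ ends v unfolding v'_def by auto
    show "w = v \<or> w = v'" if "(w, cs ! j) \<in> cycle_edges vs cs" for w
      using cycle_check_endpoints[OF assms(1) j(1) that] v unfolding v'_def by auto
  qed (rule j(2))
qed

theorem theorem3:
  fixes E :: "('v \<times> 'c) set" and x y :: "'v \<Rightarrow> int"
    and Dch :: real and Dav :: "nat \<Rightarrow> real"
    and vs :: "'v list" and cs :: "'c list"
  assumes "finite E"
    and "is_codeword E x"
    and "\<forall>v. y v \<in> {1, -1}"
    and "Dch > 0" and "\<forall>t. Dav t > 0"
    and "is_cycle E vs cs"
    and "\<forall>v \<in> set vs. card (var_nbrs E v) \<in> {2, 3}"
    and "\<forall>v \<in> set vs. y v = - x v"
    and "\<forall>t. \<forall>c \<in> set cs. \<forall>v \<in> chk_nbrs E c. (v, c) \<notin> cycle_edges vs cs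
            \<longrightarrow> vc_msg E y Dch Dav t v c = x v"
  shows "\<forall>t. \<forall>(v, c) \<in> cycle_edges vs cs. vc_msg E y Dch Dav t v c = - x v"
proof
  fix t
  note edge = cycle_edge_in_graph[OF assms(6)]
  show "\<forall>(v, c) \<in> cycle_edges vs cs. vc_msg E y Dch Dav t v c = - x v"
  proof (induction t)
    case 0
    then show ?case
      using assms(8) edge by auto
  next
    case (Suc t)
    show ?case
    proof clarify
      fix v c
      assume vc: "(v, c) \<in> cycle_edges vs cs"
      obtain c' v' where c': "c' \<noteq> c" "v' \<noteq> v" "(v, c') \<in> cycle_edges vs cs"
        "(v', c') \<in> cycle_edges vs cs"
        and only: "\<And>w. (w, c') \<in> cycle_edges vs cs \<Longrightarrow> w = v \<or> w = v'"
        using cycle_edge_continues[OF assms(6) vc] by blast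
      have off_cycle_correct: "vc_msg E y Dch Dav t w c' = x w"
        if "w \<in> chk_nbrs E c' - {v, v'}" for w
        using assms(9) edge(3)[OF c'(3)] only that by blast
      have "cv_msg E (vc_msg E y Dch Dav t) c' v = - x v"
      proof (rule cv_msg_single_error[OF finite_chk_nbrs[OF assms(1)]])
        show "(\<Prod>w\<in>chk_nbrs E c'. x w) = 1" "x v \<in> {1, -1}"
          using assms(2) unfolding is_codeword_def by auto
        show "v \<in> chk_nbrs E c'" "v' \<in> chk_nbrs E c'"
          using edge(1) c'(3,4) unfolding chk_nbrs_def by auto
        show "vc_msg E y Dch Dav t v' c' = - x v'"
          using Suc.IH c'(4) by auto
      qed (use c'(2) off_cycle_correct in auto)
      moreover have "y v = - x v" "card (var_nbrs E v) \<le> 3"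
        using assms(7,8) edge(2)[OF vc] by auto
      ultimately show "vc_msg E y Dch Dav (Suc t) v c = - x v"
        using vc_msg_Suc_keeps_channel_sign[OF assms(1,3,4)] assms(5) edge(1) vc c'(1,3)
        by metis
    qed
  qed
qed

end
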